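(* For every integer $n>2$ there exists a cake-cutting instance with $n$ players and an envy-free partial connected division $y$ such that, for every envy-free complete connected division $x$ of that instance, there are $n-2$ players $i$ with $u_i(y,i)=2\,u_i(x,i)$ (with $u_i(x,i)>0$), and the remaining two players $i$ satisfy $u_i(y,i)\ge u_i(x,i)$.
   Context: A cake is the interval $[0,1]$. There are $n$ players; each player $i$ has a valuation $v_i$, a nonatomic probability measure on $[0,1]$. A (connected) division $x$ is a sequence $(X_1,\dots,X_n)$ of pairwise disjoint open intervals of $[0,1]$ (possibly empty), $X_i$ being the piece of player $i$; it is complete if the union of the closures of the $X_i$ equals $[0,1]$, and partial otherwise. Write $u_i(x,j)=v_i(X_j)$. $x$ is envy-free if $u_i(x,i)\ge u_i(x,j)$ for all $i,j$. *)

theory Defs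
  imports "HOL-Probability.Probability"
begin

definition nonatomic :: "'a measure \<Rightarrow> bool" where
  "nonatomic M \<longleftrightarrow> \<not> (\<exists>A\<in>sets M. emeasure M A > 0 \<and>
      (\<forall>B\<in>sets M. B \<subseteq> A \<longrightarrow> emeasure M B = 0 \<or> emeasure M B = emeasure M A))"

definition valuation :: "real measure \<Rightarrow> bool" where
  "valuation M \<longleftrightarrow> prob_space M \<and> sets M = sets (restrict_space borel {0..1})
     \<and> nonatomic M"

definition open_subinterval :: "real set \<Rightarrow> bool" where
  "open_subinterval X \<longleftrightarrow> (\<exists>a b. 0 \<le> a \<and> b \<le> 1 \<and> X = {a<..<b})"

definition division :: "nat \<Rightarrow> (nat \<Rightarrow> real set) \<Rightarrow> bool" where
  "division n X \<longleftrightarrow> (\<forall>i<n. open_subinterval (X i)) \<and>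
     (\<forall>i<n. \<forall>j<n. i \<noteq> j \<longrightarrow> X i \<inter> X j = {})"

definition complete_div :: "nat \<Rightarrow> (nat \<Rightarrow> real set) \<Rightarrow> bool" where
  "complete_div n X \<longleftrightarrow> (\<Union>i<n. closure (X i)) = {0..1}"

definition util :: "(nat \<Rightarrow> real measure) \<Rightarrow> (nat \<Rightarrow> real set) \<Rightarrow> nat \<Rightarrow> nat \<Rightarrow> real" where
  "util v X i j = measure (v i) (X j)"

definition envy_free :: "nat \<Rightarrow> (nat \<Rightarrow> real measure) \<Rightarrow> (nat \<Rightarrow> real set) \<Rightarrow> bool" where
  "envy_free n v X \<longleftrightarrow> (\<forall>i<n. \<forall>j<n. util v X i i \<ge> util v X i j)"

end

theory Submission
  imports Defs
begin

text \<open>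
  With u = 1/(2n+1), player k < n-2 values
  P k = [(2k+1)u, (2k+3)u] uniformly, player n-2 values C = [(2n-2)u, (2n-1)u], and the last
  player n-1 values B = [0,1] - C. The partial division y gives every player k < n-1 the interior
  of her support and the last player ((2n-1)u, 1); it leaves [0,u] unallocated and is envy-free.
  In a complete envy-free division x, the last player's piece holds at most 2u of B (otherwise
  player n-2 or some player k < n-2 would envy it); as the last player envies no piece and the
  pieces tile B, of length 2nu, every piece holds exactly 2u of B. Counting the pieces to the
  left of a left end puts every left end in the first part of B on the grid 2mu, so no piece
  straddles such a grid point and every player k < n-2 receives exactly half of P k, while y
  gives her all of it.
\<close>

section \<open>Lebesgue measure on the cake\<close>

definition cake :: "real measure" where
  "cake = restrict_space lborel {0..1}"

lemma sets_cake: "sets cake = sets (restrict_space borel {0..1})"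
  unfolding cake_def by (rule sets_restrict_space_cong) simp

lemma space_cake: "space cake = {0..1}"
  unfolding cake_def by (simp add: space_restrict_space)

lemma sets_cake_iff: "S \<in> sets cake \<longleftrightarrow> S \<in> sets borel \<and> S \<subseteq> {0..1}"
  unfolding sets_cake by (auto simp: sets_restrict_space_iff)

lemma emeasure_cake: "S \<in> sets borel \<Longrightarrow> S \<subseteq> {0..1} \<Longrightarrow> emeasure cake S = emeasure lborel S"
  unfolding cake_def by (subst emeasure_restrict_space) auto

interpretation cake: finite_measure cake
  by standard (simp add: space_cake emeasure_cake)

lemma measure_cake: "S \<in> sets borel \<Longrightarrow> S \<subseteq> {0..1} \<Longrightarrow> measure cake S = measure lborel S"
  by (simp add: measure_def emeasure_cake)

lemma measure_lborel_between:
  fixes p q :: real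
  assumes "{p<..<q} \<subseteq> S" "S \<subseteq> {p..q}" "S \<in> sets borel"
  shows "measure lborel S = max 0 (q - p)"
proof (cases "p \<le> q")
  case True
  have "emeasure lborel S \<le> emeasure lborel {p..q}"
    using assms(2) by (rule emeasure_mono) simp
  then have "emeasure lborel S < \<top>"
    using True by (metis emeasure_lborel_Icc ennreal_less_top order.strict_trans1)
  then have "measure lborel {p<..<q} \<le> measure lborel S"
    using assms by (intro measure_mono_fmeasurable) (auto simp: fmeasurable_def)
  moreover have "measure lborel S \<le> measure lborel {p..q}"
    by (rule measure_mono_fmeasurable) (use assms in \<open>auto simp: fmeasurable_def emeasure_lborel_Icc_eq\<close>)
  ultimately show ?thesis using True by simp
next
  case False
  then show ?thesis using assms(2) by auto
qed

lemma measure_cake_overlap: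
  fixes a b c d :: real
  assumes "0 \<le> c" "d \<le> 1"
  shows "measure cake ({c..d} \<inter> {a<..<b}) = max 0 (min b d - max a c)"
  using assms by (subst measure_cake) (auto intro!: measure_lborel_between)

lemma measure_cake_Icc: "0 \<le> c \<Longrightarrow> c \<le> d \<Longrightarrow> d \<le> 1 \<Longrightarrow> measure cake {c..d} = d - c"
  by (simp add: measure_cake)

lemma cake_cdf_increment:
  assumes D: "D \<in> sets cake" and "s \<le> t"
  shows "measure cake (D \<inter> {..t}) - measure cake (D \<inter> {..s}) \<le> t - s"
proof -
  have sets: "D \<inter> {..s} \<in> sets cake" "D \<inter> {s<..t} \<in> sets cake"
    using D by (auto simp: sets_cake_iff)
  have "D \<inter> {..t} = (D \<inter> {..s}) \<union> (D \<inter> {s<..t})" using \<open>s \<le> t\<close> by auto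
  then have "measure cake (D \<inter> {..t}) = measure cake (D \<inter> {..s}) + measure cake (D \<inter> {s<..t})"
    using sets by (subst cake.finite_measure_Union[symmetric]) auto
  moreover have "measure cake (D \<inter> {s<..t}) = measure lborel (D \<inter> {s<..t})"
    using sets by (simp add: measure_cake sets_cake_iff)
  moreover have "measure lborel (D \<inter> {s<..t}) \<le> measure lborel {s<..t}"
    using sets \<open>s \<le> t\<close>
    by (intro measure_mono_fmeasurable) (auto simp: sets_cake_iff fmeasurable_def)
  ultimately show ?thesis using \<open>s \<le> t\<close> by simp
qed


lemma cake_halving:
  assumes D: "D \<in> sets cake"
  obtains t where "measure cake (D \<inter> {..t}) = measure cake D / 2"
proof -
  define g where "g t = measure cake (D \<inter> {..t})" for t
  have mono: "g s \<le> g t" if "s \<le> t" for s t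
    unfolding g_def using that D by (intro cake.finite_measure_mono) (auto simp: sets_cake_iff)
  have "1-lipschitz_on {-1..1} g"
  proof (rule lipschitz_onI)
    fix s t :: real
    show "dist (g s) (g t) \<le> 1 * dist s t"
      using cake_cdf_increment[OF D, of s t] cake_cdf_increment[OF D, of t s] mono[of s t] mono[of t s]
      by (cases "s \<le> t") (auto simp: g_def dist_real_def)
  qed simp
  then have "continuous_on {-1..1} g" by (rule lipschitz_on_continuous_on)
  moreover have "D \<inter> {..-1} = {}" "D \<inter> {..1} = D"
    using D by (auto simp: sets_cake_iff)
  then have "g (-1) = 0" "g 1 = measure cake D"
    by (simp_all add: g_def)
  moreover have "0 \<le> measure cake D" by simp
  ultimately obtain t where "g t = measure cake D / 2"
    using IVT'[of g "-1" "measure cake D / 2" 1] by auto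
  then show ?thesis using that by (simp add: g_def)
qed

section \<open>Uniform valuations\<close>

definition uniform_on :: "real set \<Rightarrow> real measure" where
  "uniform_on A = uniform_measure cake A"

lemma sets_uniform_on [simp]: "sets (uniform_on A) = sets cake"
  by (simp add: uniform_on_def)

lemma emeasure_uniform_on:
  assumes "A \<in> sets cake" "measure cake A > 0" "S \<in> sets cake"
  shows "emeasure (uniform_on A) S = ennreal (measure cake (A \<inter> S) / measure cake A)"
  using assms by (simp add: uniform_on_def cake.emeasure_eq_measure divide_ennreal)

lemma measure_uniform_on:
  assumes "A \<in> sets cake" "measure cake A > 0" "S \<in> sets cake"
  shows "measure (uniform_on A) S = measure cake (A \<inter> S) / measure cake A"
  using emeasure_uniform_on[OF assms] assms(2) by (simp add: measure_def)

lemma nonatomic_uniform_on: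
  assumes A: "A \<in> sets cake" and pos: "measure cake A > 0"
  shows "nonatomic (uniform_on A)"
  unfolding nonatomic_def
proof (rule notI, elim bexE conjE)
  fix S assume S: "S \<in> sets (uniform_on A)" and S_pos: "emeasure (uniform_on A) S > 0"
    and atom: "\<forall>B\<in>sets (uniform_on A). B \<subseteq> S \<longrightarrow>
      emeasure (uniform_on A) B = 0 \<or> emeasure (uniform_on A) B = emeasure (uniform_on A) S"
  have S_cake: "S \<in> sets cake" using S by simp
  have D: "A \<inter> S \<in> sets cake" using A S_cake by simp
  have D_pos: "measure cake (A \<inter> S) > 0"
    using S_pos pos emeasure_uniform_on[OF A pos S_cake] by (auto simp: zero_less_divide_iff)
  obtain t where t: "measure cake (A \<inter> S \<inter> {..t}) = measure cake (A \<inter> S) / 2"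
    using cake_halving[OF D] .
  have half: "S \<inter> {..t} \<in> sets cake" using S_cake by (auto simp: sets_cake_iff)
  have "emeasure (uniform_on A) (S \<inter> {..t}) = ennreal (measure cake (A \<inter> S) / 2 / measure cake A)"
    using emeasure_uniform_on[OF A pos half] by (simp add: Int_assoc[symmetric] t)
  moreover have "emeasure (uniform_on A) S = ennreal (measure cake (A \<inter> S) / measure cake A)"
    using emeasure_uniform_on[OF A pos S_cake] .
  ultimately show False
    using atom half D_pos pos by auto
qed

lemma valuation_uniform_on:
  assumes A: "A \<in> sets cake" and pos: "measure cake A > 0"
  shows "valuation (uniform_on A)"
  unfolding valuation_def
proof (intro conjI)
  show "prob_space (uniform_on A)"
    unfolding uniform_on_def using pos
    by (intro prob_space_uniform_measure) (auto simp: cake.emeasure_eq_measure)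
  show "sets (uniform_on A) = sets (restrict_space borel {0..1})"
    by (simp add: sets_cake)
  show "nonatomic (uniform_on A)"
    using A pos by (rule nonatomic_uniform_on)
qed


section \<open>Connected divisions\<close>

lemma open_subinterval_sets: "open_subinterval X \<Longrightarrow> X \<in> sets cake"
  unfolding open_subinterval_def sets_cake_iff by auto

lemma division_endpoints:
  assumes "division n x"
  obtains a b where "\<And>i. i < n \<Longrightarrow> 0 \<le> a i \<and> b i \<le> 1 \<and> x i = {a i<..<b i}"
proof -
  have "\<forall>i. \<exists>a b. i < n \<longrightarrow> 0 \<le> a \<and> b \<le> 1 \<and> x i = {a<..<b}"
    using assms by (auto simp: division_def open_subinterval_def)
  then show ?thesis using that by metis
qed

lemma finite_null_sets_cake:
  assumes "finite N" "N \<subseteq> {0..1}"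
  shows "N \<in> null_sets cake"
proof -
  have "N \<in> null_sets lborel" using assms(1) by (rule finite_imp_null_set_lborel)
  then show ?thesis using assms(2) by (auto simp: null_sets_def sets_cake_iff emeasure_cake)
qed

lemma division_boundary_finite:
  assumes "division n x"
  shows "finite (\<Union>i<n. closure (x i) - x i)"
proof -
  obtain a b where ab: "\<And>i. i < n \<Longrightarrow> 0 \<le> a i \<and> b i \<le> 1 \<and> x i = {a i<..<b i}"
    using division_endpoints[OF assms] by blast
  have "closure (x i) - x i \<subseteq> {a i, b i}" if "i < n" for i
    using ab[OF that] by (cases "a i < b i") auto
  then show ?thesis by (auto intro: finite_subset)
qed

lemma complete_division_tiling:
  assumes div: "division n x" and cpl: "complete_div n x"
    and t: "\<forall>i<n. t \<notin> x i" and D: "D \<in> sets cake"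
  shows "measure cake (D \<inter> {..t}) = (\<Sum>i | i < n \<and> x i \<subseteq> {..t}. measure cake (D \<inter> x i))"
proof -
  obtain a b where ab: "\<And>i. i < n \<Longrightarrow> 0 \<le> a i \<and> b i \<le> 1 \<and> x i = {a i<..<b i}"
    using division_endpoints[OF div] by blast
  define I where "I = {i. i < n \<and> x i \<subseteq> {..t}}"
  define N where "N = D \<inter> insert t (\<Union>i<n. closure (x i) - x i)"
  have x_sets: "x i \<in> sets cake" if "i < n" for i
    using that div by (simp add: division_def open_subinterval_sets)
  have N_null: "N \<in> null_sets cake"
    using division_boundary_finite[OF div] D by (intro finite_null_sets_cake) (auto simp: N_def sets_cake_iff)
  have left: "D \<inter> {..t} \<subseteq> (\<Union>i\<in>I. D \<inter> x i) \<union> N"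
  proof
    fix p assume p: "p \<in> D \<inter> {..t}"
    then have "p \<in> (\<Union>i<n. closure (x i))" using cpl D by (auto simp: complete_div_def sets_cake_iff)
    then obtain i where i: "i < n" "p \<in> closure (x i)" by auto
    show "p \<in> (\<Union>i\<in>I. D \<inter> x i) \<union> N"
    proof (cases "x i \<subseteq> {..t}")
      case True
      then show ?thesis using p i by (cases "p \<in> x i") (auto simp: I_def N_def)
    next
      case False
      then have "t \<le> a i" "a i < b i" using t i ab[OF i(1)] by (auto simp: subset_eq)
      then have "p = t" using i p ab[OF i(1)] by auto
      then show ?thesis using p by (simp add: N_def)
    qed
  qed
  have union_sets: "(\<Union>i\<in>I. D \<inter> x i) \<in> sets cake"
    using D x_sets by (auto simp: I_def)
  have "measure cake (D \<inter> {..t}) \<le> measure cake ((\<Union>i\<in>I. D \<inter> x i) \<union> N)"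
    using left union_sets N_null by (intro cake.finite_measure_mono) auto
  also have "\<dots> = measure cake (\<Union>i\<in>I. D \<inter> x i)"
    using union_sets N_null by (rule measure_Un_null_set)
  moreover have "measure cake (\<Union>i\<in>I. D \<inter> x i) \<le> measure cake (D \<inter> {..t})"
    using D by (intro cake.finite_measure_mono) (auto simp: I_def sets_cake_iff)
  ultimately have "measure cake (D \<inter> {..t}) = measure cake (\<Union>i\<in>I. D \<inter> x i)"
    by linarith
  also have "\<dots> = (\<Sum>i\<in>I. measure cake (D \<inter> x i))"
  proof (rule measure_finite_Union)
    show "disjoint_family_on (\<lambda>i. D \<inter> x i) I"
      using div unfolding disjoint_family_on_def division_def I_def by blast
  qed (use D x_sets in \<open>auto simp: I_def\<close>)
  finally show ?thesis by (simp add: I_def)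
qed

lemma division_left_end_outside:
  assumes div: "division n x" and j: "j < n" "x j = {l<..<r}" "l < r"
  shows "\<forall>i<n. l \<notin> x i"
proof (intro allI impI notI)
  fix i assume i: "i < n" and l_in: "l \<in> x i"
  obtain a b where ab: "\<And>i. i < n \<Longrightarrow> 0 \<le> a i \<and> b i \<le> 1 \<and> x i = {a i<..<b i}"
    using division_endpoints[OF div] by blast
  have "i \<noteq> j" using l_in j by auto
  have "a i < l" "l < b i" using l_in ab[OF i] by auto
  then have "(l + min r (b i)) / 2 \<in> x i \<inter> x j"
    using ab[OF i] j by (auto simp: min_def)
  moreover have "x i \<inter> x j = {}" using div i j(1) \<open>i \<noteq> j\<close> unfolding division_def by blast
  ultimately show False by blast
qed

text \<open>In an envy-free division no player values another piece at more than one half: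
  it is worth no more than her own piece, and the two pieces are disjoint.\<close>
lemma envy_free_other_le_half:
  assumes val: "valuation (v i)" and div: "division n x" and ef: "envy_free n v x"
    and ij: "i < n" "j < n" "i \<noteq> j"
  shows "util v x i j \<le> 1 / 2"
proof -
  interpret prob_space "v i" using val by (simp add: valuation_def)
  have sets: "x i \<in> sets (v i)" "x j \<in> sets (v i)"
    using val div ij by (auto simp: valuation_def division_def sets_cake[symmetric] open_subinterval_sets)
  have "util v x i i + util v x i j = measure (v i) (x i \<union> x j)"
    using sets div ij by (simp add: util_def division_def finite_measure_Union)
  also have "\<dots> \<le> 1" by (rule prob_le_1)
  moreover have "util v x i j \<le> util v x i i"
    using ef ij by (simp add: envy_free_def)
  ultimately show ?thesis by linarith
qed


section \<open>The instance\<close>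

locale cake_instance =
  fixes n :: nat
  assumes n_gt_2: "n > 2"
begin

definition u :: real where
  "u = 1 / (2 * real n + 1)"

definition P :: "nat \<Rightarrow> real set" where
  "P k = {(2 * real k + 1) * u .. (2 * real k + 3) * u}"

definition C :: "real set" where
  "C = {(2 * real n - 2) * u .. (2 * real n - 1) * u}"

definition B :: "real set" where
  "B = {0 .. (2 * real n - 2) * u} \<union> {(2 * real n - 1) * u .. 1}"

definition val :: "nat \<Rightarrow> real measure" where
  "val i = uniform_on (if i < n - 2 then P i else if i = n - 2 then C else B)"

lemma u_pos: "u > 0"
  by (simp add: u_def)

lemma u_total: "(2 * real n + 1) * u = 1"
  by (simp add: u_def)

lemma C_ends: "(2 * real n - 2) * u = 1 - 3 * u" "(2 * real n - 1) * u = 1 - 2 * u"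
  using u_total by (auto simp: algebra_simps)

lemma u_small: "7 * u \<le> 1"
proof -
  have "7 * u \<le> (2 * real n + 1) * u" using n_gt_2 u_pos by (intro mult_right_mono) auto
  then show ?thesis using u_total by simp
qed

lemma P_ends:
  assumes "k < n - 2"
  shows "0 \<le> (2 * real k + 1) * u" "(2 * real k + 3) * u = (2 * real k + 1) * u + 2 * u"
    "(2 * real k + 3) * u \<le> 1 - 4 * u"
proof -
  have "real k + 3 \<le> real n" using assms by linarith
  then have "(2 * real k + 3) * u \<le> (2 * real n - 3) * u" using u_pos by (intro mult_right_mono) auto
  moreover have "(2 * real n - 3) * u = 1 - 4 * u" using u_total by (simp add: algebra_simps)
  ultimately show "(2 * real k + 3) * u \<le> 1 - 4 * u" by simp
qed (use u_pos in \<open>auto simp: algebra_simps\<close>)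

lemma P_sets: "k < n - 2 \<Longrightarrow> P k \<in> sets cake"
  using P_ends[of k] u_pos by (auto simp: P_def sets_cake_iff)

lemma C_sets: "C \<in> sets cake"
  using C_ends u_small u_pos by (auto simp: C_def sets_cake_iff)

lemma B_sets: "B \<in> sets cake"
  using C_ends u_pos u_small by (auto simp: B_def sets_cake_iff)

lemma P_overlap:
  assumes "k < n - 2"
  shows "measure cake (P k \<inter> {a<..<b}) = max 0 (min b ((2 * real k + 3) * u) - max a ((2 * real k + 1) * u))"
  unfolding P_def using P_ends[OF assms] u_pos by (intro measure_cake_overlap) auto

lemma C_overlap:
  "measure cake (C \<inter> {a<..<b}) = max 0 (min b ((2 * real n - 1) * u) - max a ((2 * real n - 2) * u))"
  unfolding C_def using C_ends u_pos u_small by (intro measure_cake_overlap) auto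

lemma B_overlap:
  "measure cake (B \<inter> {a<..<b}) =
     max 0 (min b ((2 * real n - 2) * u) - max a 0) + max 0 (min b 1 - max a ((2 * real n - 1) * u))"
proof -
  let ?L = "{0 .. (2 * real n - 2) * u} \<inter> {a<..<b}" and ?R = "{(2 * real n - 1) * u .. 1} \<inter> {a<..<b}"
  have bounds: "0 \<le> (2 * real n - 2) * u" "(2 * real n - 2) * u < (2 * real n - 1) * u"
      "(2 * real n - 1) * u \<le> 1"
    using C_ends u_pos u_small by auto
  then have "B \<inter> {a<..<b} = ?L \<union> ?R" "?L \<inter> ?R = {}"
    by (auto simp: B_def)
  moreover have "?L \<in> sets cake" "?R \<in> sets cake"
    using bounds by (auto simp: sets_cake_iff)
  ultimately have "measure cake (B \<inter> {a<..<b}) = measure cake ?L + measure cake ?R"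
    by (simp add: cake.finite_measure_Union)
  then show ?thesis
    using bounds by (simp add: measure_cake_overlap)
qed

lemma measure_P: "k < n - 2 \<Longrightarrow> measure cake (P k) = 2 * u"
  using P_ends[of k] u_pos unfolding P_def by (subst measure_cake_Icc) auto

lemma measure_C: "measure cake C = u"
  unfolding C_def using C_ends u_pos u_small by (subst measure_cake_Icc) auto

lemma measure_B: "measure cake B = 2 * real n * u"
proof -
  have "B \<inter> {-1<..<2} = B" using C_ends u_pos u_small by (auto simp: B_def)
  then show ?thesis
    using B_overlap[of "-1" 2, unfolded C_ends] u_pos u_small u_total by (simp add: max_def min_def algebra_simps)
qed

lemma value_P: "k < n - 2 \<Longrightarrow> S \<in> sets cake \<Longrightarrow> measure (val k) S = measure cake (P k \<inter> S) / (2 * u)"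
  using measure_P[of k] P_sets[of k] u_pos by (simp add: val_def measure_uniform_on)

lemma value_C: "S \<in> sets cake \<Longrightarrow> measure (val (n - 2)) S = measure cake (C \<inter> S) / u"
  using measure_C C_sets u_pos n_gt_2 by (simp add: val_def measure_uniform_on)

lemma value_B:
  assumes "S \<in> sets cake"
  shows "measure (val (n - 1)) S = measure cake (B \<inter> S) / (2 * real n * u)"
proof -
  have "\<not> n - 1 < n - 2" "n - 1 \<noteq> n - 2" "0 < 2 * real n * u" using n_gt_2 u_pos by auto
  then show ?thesis using measure_B B_sets assms by (simp add: val_def measure_uniform_on)
qed

lemma valuation_val: "i < n \<Longrightarrow> valuation (val i)"
  using measure_P P_sets measure_C C_sets measure_B B_sets u_pos n_gt_2
  by (auto simp: val_def intro!: valuation_uniform_on)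


lemma value_le_1: "i < n \<Longrightarrow> measure (val i) S \<le> 1"
  using valuation_val[of i] by (simp add: valuation_def prob_space.prob_le_1)

section \<open>The partial division\<close>

definition y :: "nat \<Rightarrow> real set" where
  "y i = (if i < n - 2 then {(2 * real i + 1) * u <..< (2 * real i + 3) * u}
     else if i = n - 2 then {(2 * real n - 2) * u <..< (2 * real n - 1) * u}
     else {(2 * real n - 1) * u <..< 1})"

lemma y_window: "i < n \<Longrightarrow> y i \<subseteq> {(2 * real i + 1) * u <..< (2 * real i + 3) * u}"
proof -
  assume "i < n"
  then consider "i < n - 2" | "i = n - 2" | "i = n - 1" by linarith
  then show ?thesis
  proof cases
    case 2
    then have "real i = real n - 2" using n_gt_2 by simp
    then show ?thesis using 2 u_pos by (auto simp: y_def algebra_simps)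
  next
    case 3
    then have "real i = real n - 1" using n_gt_2 by simp
    then show ?thesis using 3 u_total n_gt_2 by (auto simp: y_def algebra_simps)
  qed (simp add: y_def)
qed

lemma y_open_subinterval: "open_subinterval (y i)"
proof -
  have "0 \<le> (2 * real n - 1) * u" "0 \<le> (2 * real n - 2) * u" "(2 * real n - 1) * u \<le> 1"
    using C_ends u_pos u_small by auto
  moreover have "0 \<le> (2 * real i + 1) * u" "i < n - 2 \<Longrightarrow> (2 * real i + 3) * u \<le> 1"
    using P_ends[of i] u_pos by auto
  ultimately show ?thesis
    unfolding y_def open_subinterval_def by (auto simp del: of_nat_diff)
qed

lemma y_sets: "y i \<in> sets cake"
  by (simp add: y_open_subinterval open_subinterval_sets)

lemma y_division: "division n y"
  unfolding division_def
proof (intro conjI allI impI)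
  fix i j assume ij: "i < n" "j < n" "i \<noteq> j"
  have apart: "(2 * real i + 3) * u \<le> (2 * real j + 1) * u" if "i < j" for i j :: nat
    using that u_pos by (intro mult_right_mono) auto
  have "(2 * real i + 3) * u \<le> (2 * real j + 1) * u \<or> (2 * real j + 3) * u \<le> (2 * real i + 1) * u"
    using apart[of i j] apart[of j i] ij by linarith
  then show "y i \<inter> y j = {}" using y_window[OF ij(1)] y_window[OF ij(2)] by fastforce
qed (rule y_open_subinterval)

lemma y_not_complete: "\<not> complete_div n y"
proof
  assume "complete_div n y"
  then have "0 \<in> (\<Union>i<n. closure (y i))" by (simp add: complete_div_def)
  then obtain i where i: "i < n" "0 \<in> closure (y i)" by blast
  have "u \<le> (2 * real i + 1) * u" using u_pos by simp
  then have "y i \<subseteq> {u..}" using y_window[OF i(1)] by fastforce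
  then have "closure (y i) \<subseteq> {u..}" by (intro closure_minimal) auto
  then show False using i u_pos by auto
qed

lemma measure_y_le:
  assumes "i < n"
  shows "measure cake (y i) \<le> 2 * u"
proof -
  have "measure cake (y i) = measure lborel (y i)"
    using y_sets by (simp add: measure_cake sets_cake_iff)
  also have "\<dots> \<le> measure lborel {(2 * real i + 1) * u <..< (2 * real i + 3) * u}"
    using y_window[OF assms] y_sets u_pos
    by (intro measure_mono_fmeasurable) (auto simp: sets_cake_iff fmeasurable_def)
  also have "\<dots> = 2 * u" using u_pos by (simp add: algebra_simps)
  finally show ?thesis .
qed


lemma y_value_P:
  assumes "k < n - 2"
  shows "measure (val k) (y k) = 1"
proof -
  have "measure cake (P k \<inter> y k) = 2 * u"
    using assms P_overlap[OF assms] P_ends[OF assms] u_pos by (simp add: y_def)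
  then show ?thesis using u_pos by (simp add: value_P[OF assms y_sets])
qed

lemma y_value_C: "measure (val (n - 2)) (y (n - 2)) = 1"
proof -
  have "measure cake (C \<inter> y (n - 2)) = u"
    using C_overlap C_ends u_pos by (simp add: y_def)
  then show ?thesis using u_pos by (simp add: value_C[OF y_sets])
qed

lemma y_value_B: "measure (val (n - 1)) (y (n - 1)) = 1 / real n"
proof -
  have "\<not> n - 1 < n - 2" "n - 1 \<noteq> n - 2" using n_gt_2 by auto
  then have "measure cake (B \<inter> y (n - 1)) = 2 * u"
    using B_overlap[unfolded C_ends] u_pos u_small by (simp add: y_def C_ends max_def min_def)
  then show ?thesis using u_pos unfolding value_B[OF y_sets] by simp
qed

lemma y_value_B_le:
  assumes "j < n"
  shows "measure (val (n - 1)) (y j) \<le> 1 / real n"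
proof -
  have "measure cake (B \<inter> y j) \<le> measure cake (y j)"
    using y_sets by (intro cake.finite_measure_mono) auto
  also have "\<dots> \<le> 2 * u" using measure_y_le[OF assms] .
  finally have "measure cake (B \<inter> y j) / (2 * real n * u) \<le> 2 * u / (2 * real n * u)"
    using u_pos n_gt_2 by (intro divide_right_mono) auto
  then show ?thesis using u_pos unfolding value_B[OF y_sets] by simp
qed

lemma y_envy_free: "envy_free n val y"
  unfolding envy_free_def util_def
proof (intro allI impI)
  fix i j assume i: "i < n" and j: "j < n"
  consider "i < n - 2" | "i = n - 2" | "i = n - 1" using i by linarith
  then show "measure (val i) (y j) \<le> measure (val i) (y i)"
  proof cases
    case 1 then show ?thesis using y_value_P value_le_1[OF i] by simp
  next
    case 2 then show ?thesis using y_value_C value_le_1[OF i] by simp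
  next
    case 3 then show ?thesis using y_value_B y_value_B_le[OF j] by simp
  qed
qed


section \<open>Complete envy-free divisions of the instance\<close>

text \<open>An interval in the first part of B that is longer than 2u contains more than half of
  some support P k, so player k would envy its owner.\<close>
lemma long_interval_meets_P:
  assumes "0 \<le> l" "l + 2 * u < r" "l + 2 * u < 1 - 3 * u"
  obtains k where "k < n - 2" "measure cake (P k \<inter> {l<..<r}) > u"
proof -
  define k where "k = nat \<lfloor>l / (2 * u)\<rfloor>"
  have "real k \<le> l / (2 * u)" "l / (2 * u) < real k + 1"
    using assms(1) u_pos by (simp_all add: k_def)
  then have k_low: "2 * real k * u \<le> l" and k_high: "l < 2 * real k * u + 2 * u"
    using u_pos by (simp_all add: field_simps)
  have "(2 * real k) * u < (2 * real n - 4) * u"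
    using k_low assms(3) u_total by (simp add: algebra_simps)
  then have "k < n - 2" using u_pos by simp
  moreover have "measure cake (P k \<inter> {l<..<r}) > u"
    using P_overlap[OF \<open>k < n - 2\<close>] k_low k_high assms(2) u_pos
    by (auto simp: algebra_simps max_def min_def)
  ultimately show ?thesis using that by blast
qed

end

locale complete_envy_free = cake_instance +
  fixes x :: "nat \<Rightarrow> real set" and a b :: "nat \<Rightarrow> real"
  assumes x_division: "division n x"
    and x_complete: "complete_div n x"
    and x_envy_free: "envy_free n val x"
    and x_ends: "\<And>i. i < n \<Longrightarrow> 0 \<le> a i \<and> b i \<le> 1 \<and> x i = {a i<..<b i}"
begin

lemma x_sets: "i < n \<Longrightarrow> x i \<in> sets cake"
  using x_division by (simp add: division_def open_subinterval_sets)

lemma no_envy: "i < n \<Longrightarrow> j < n \<Longrightarrow> measure (val i) (x j) \<le> measure (val i) (x i)"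
  using x_envy_free by (simp add: envy_free_def util_def)

lemma other_piece_le_half: "i < n \<Longrightarrow> j < n \<Longrightarrow> i \<noteq> j \<Longrightarrow> measure (val i) (x j) \<le> 1 / 2"
  using envy_free_other_le_half[OF valuation_val x_division x_envy_free] by (simp add: util_def)

lemma B_piece:
  "j < n \<Longrightarrow> measure cake (B \<inter> x j) = max 0 (min (b j) (1 - 3 * u) - a j) + max 0 (b j - max (a j) (1 - 2 * u))"
  using B_overlap[of "a j" "b j", unfolded C_ends] x_ends[of j] by simp


text \<open>The last player's own piece is worth at most 2u of B: otherwise it either contains
  the whole support C of player n-2, or half of some support P k.\<close>
lemma last_piece_B_le: "measure cake (B \<inter> x (n - 1)) \<le> 2 * u"
proof -
  define l r where "l = a (n - 1)" and "r = b (n - 1)"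
  have last: "n - 1 < n" "n - 2 < n" "n - 2 \<noteq> n - 1" using n_gt_2 by auto
  have ends: "0 \<le> l" "r \<le> 1" "x (n - 1) = {l<..<r}"
    using x_ends[OF last(1)] by (auto simp: l_def r_def)
  have B_last: "measure cake (B \<inter> x (n - 1)) = max 0 (min r (1 - 3 * u) - l) + max 0 (r - max l (1 - 2 * u))"
    using B_piece[OF last(1)] by (simp add: l_def r_def)
  consider (covers_C) "l < 1 - 3 * u" "1 - 2 * u < r" | (right) "1 - 3 * u \<le> l" | (left) "r \<le> 1 - 2 * u"
    by linarith
  then show ?thesis
  proof cases
    case covers_C
    then have "measure cake (C \<inter> x (n - 1)) = u"
      using C_overlap[unfolded C_ends] ends by (simp add: max_def min_def)
    then have "measure (val (n - 2)) (x (n - 1)) = 1"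
      using u_pos unfolding value_C[OF x_sets[OF last(1)]] by simp
    then show ?thesis using other_piece_le_half[OF last(2,1,3)] by simp
  next
    case right
    then show ?thesis using B_last ends u_pos by (simp add: max_def min_def)
  next
    case left
    show ?thesis
    proof (rule ccontr)
      assume "\<not> ?thesis"
      then have "l + 2 * u < r" "l + 2 * u < 1 - 3 * u"
        using B_last left ends u_pos by (auto simp: max_def min_def split: if_splits)
      then obtain k where k: "k < n - 2" "measure cake (P k \<inter> x (n - 1)) > u"
        using long_interval_meets_P ends by metis
      then have "measure (val k) (x (n - 1)) > 1 / 2"
        using u_pos unfolding value_P[OF k(1) x_sets[OF last(1)]] by (simp add: field_simps)
      moreover have "measure (val k) (x (n - 1)) \<le> 1 / 2"
        using k(1) by (intro other_piece_le_half) auto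
      ultimately show False by simp
    qed
  qed
qed


text \<open>Hence, as the last player envies no piece, every piece is worth at most 2u of B;
  since the n pieces together cover B, of measure 2nu, each is worth exactly 2u.\<close>
lemma B_piece_eq:
  assumes "j < n"
  shows "measure cake (B \<inter> x j) = 2 * u"
proof -
  have last: "n - 1 < n" using n_gt_2 by simp
  have scale: "0 < 2 * real n * u" using n_gt_2 u_pos by simp
  have le: "measure cake (B \<inter> x i) \<le> 2 * u" if i: "i < n" for i
  proof -
    have "measure cake (B \<inter> x i) / (2 * real n * u) \<le> measure cake (B \<inter> x (n - 1)) / (2 * real n * u)"
      using no_envy[OF last i] unfolding value_B[OF x_sets[OF i]] value_B[OF x_sets[OF last]] .
    then have "measure cake (B \<inter> x i) \<le> measure cake (B \<inter> x (n - 1))"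
      using scale by (simp add: divide_le_cancel)
    then show ?thesis using last_piece_B_le by linarith
  qed
  have right_end: "\<forall>i<n. 1 \<notin> x i" using x_ends by fastforce
  have "B \<inter> {..1} = B" using B_sets by (auto simp: sets_cake_iff)
  moreover have "{i. i < n \<and> x i \<subseteq> {..1}} = {..<n}" using x_ends by fastforce
  ultimately have "measure cake B = (\<Sum>i<n. measure cake (B \<inter> x i))"
    using complete_division_tiling[OF x_division x_complete right_end B_sets] by simp
  then have "(\<Sum>i<n. measure cake (B \<inter> x i)) = (\<Sum>i<n. 2 * u)"
    using measure_B by simp
  then show ?thesis by (rule sum_mono_inv) (use le assms in auto)
qed

lemma piece_nonempty: "j < n \<Longrightarrow> a j < b j"
  using B_piece_eq[of j] x_ends[of j] u_pos by (cases "a j < b j") auto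


text \<open>A left end in the first part of B is an even multiple of u: the pieces to its left
  tile the interval [0, a j], each contributing 2u.\<close>
lemma left_end_on_grid:
  assumes j: "j < n" and left: "a j \<le> 1 - 3 * u"
  obtains m :: nat where "a j = 2 * real m * u"
proof -
  define I where "I = {i. i < n \<and> x i \<subseteq> {..a j}}"
  have outside: "\<forall>i<n. a j \<notin> x i"
    using division_left_end_outside[OF x_division j] x_ends[OF j] piece_nonempty[OF j] by blast
  have "B \<inter> {..a j} = {0..a j}"
    using left u_pos by (auto simp: B_def C_ends)
  then have "a j = measure cake (B \<inter> {..a j})"
    using x_ends[OF j] left u_pos by (simp add: measure_cake_Icc)
  also have "\<dots> = (\<Sum>i\<in>I. measure cake (B \<inter> x i))"
    unfolding I_def by (rule complete_division_tiling[OF x_division x_complete outside B_sets])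
  also have "\<dots> = 2 * real (card I) * u"
    by (simp add: B_piece_eq I_def)
  finally show ?thesis using that by blast
qed

text \<open>Consequently no piece contains an even grid point 2mu (m \<le> n-2) in its interior:
  such a piece would start at an even grid point left of 2mu and hence be worth more than
  2u of B.\<close>
lemma even_point_outside:
  assumes j: "j < n" and m: "m \<le> n - 2"
  shows "\<not> (a j < 2 * real m * u \<and> 2 * real m * u < b j)"
proof
  assume inside: "a j < 2 * real m * u \<and> 2 * real m * u < b j"
  have "real m * u \<le> (real n - 2) * u" using m n_gt_2 u_pos by (intro mult_right_mono) auto
  then have grid_left: "2 * real m * u \<le> 1 - 5 * u" using u_total by (simp add: algebra_simps)
  then obtain m' :: nat where m': "a j = 2 * real m' * u"
    using left_end_on_grid[OF j] inside u_pos by fastforce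
  then have "m' < m" using inside u_pos by (simp add: mult_less_cancel_right)
  then have "(real m' + 1) * u \<le> real m * u" using u_pos by (intro mult_right_mono) auto
  then have "a j + 2 * u \<le> 2 * real m * u" using m' by (simp add: algebra_simps)
  then have "measure cake (B \<inter> x j) > 2 * u"
    using B_piece[OF j] inside grid_left u_pos by (auto simp: max_def min_def)
  then show False using B_piece_eq[OF j] by simp
qed


text \<open>Her own piece cannot contain the midpoint K+2u, so it holds at most one half; and the piece
  covering the point K+3u/2 is squeezed between the grid points K and K+2u, so it is exactly
  (K, K+2u) and holds one half of P k, which she does not envy.\<close>
lemma small_player_value:
  assumes k: "k < n - 2"
  shows "measure (val k) (x k) = 1 / 2"
proof -
  define K where "K = 2 * real k * u"
  have kn: "k < n" "Suc k \<le> n - 2" using k by auto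
  have P_k: "(2 * real k + 1) * u = K + u" "(2 * real k + 3) * u = K + 3 * u"
    and mid: "2 * real (Suc k) * u = K + 2 * u"
    by (simp_all add: K_def algebra_simps)
  have K_bounds: "0 \<le> K" "K + 3 * u \<le> 1 - 4 * u"
    using P_ends(3)[OF k] u_pos unfolding P_k by (simp_all add: K_def)
  have "measure cake (P k \<inter> x k) \<le> u"
    using even_point_outside[OF kn(1,2)] P_overlap[OF k, of "a k" "b k"] x_ends[OF kn(1)] u_pos
    unfolding P_k mid by (auto simp: max_def min_def)
  then have upper: "measure (val k) (x k) \<le> 1 / 2"
    using u_pos unfolding value_P[OF k x_sets[OF kn(1)]] by (simp add: divide_le_eq)
  define p where "p = K + 3 / 2 * u"
  have "p \<in> (\<Union>i<n. closure (x i))"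
    using x_complete K_bounds u_pos by (auto simp: complete_div_def p_def)
  then obtain j where j: "j < n" "p \<in> closure (x j)" by blast
  then have p_in: "a j \<le> p" "p \<le> b j"
    using x_ends[OF j(1)] piece_nonempty[OF j(1)] by auto
  have "K \<le> a j" "b j \<le> K + 2 * u"
    using even_point_outside[OF j(1), of k] even_point_outside[OF j(1) kn(2)] p_in u_pos kn(2)
    unfolding mid by (auto simp: K_def p_def)
  moreover have "measure cake (B \<inter> x j) = 2 * u" using B_piece_eq[OF j(1)] .
  ultimately have "a j = K" "b j = K + 2 * u"
    using B_piece[OF j(1)] K_bounds u_pos by (auto simp: max_def min_def split: if_splits)
  then have "measure cake (P k \<inter> x j) = u"
    using P_overlap[OF k, of "a j" "b j"] x_ends[OF j(1)] u_pos unfolding P_k by (simp add: max_def min_def)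
  then have "measure (val k) (x j) = 1 / 2"
    using u_pos unfolding value_P[OF k x_sets[OF j(1)]] by simp
  then show ?thesis using no_envy[OF kn(1) j(1)] upper by simp
qed

lemma last_player_value: "measure (val (n - 1)) (x (n - 1)) = 1 / real n"
proof -
  have last: "n - 1 < n" using n_gt_2 by simp
  have "measure (val (n - 1)) (x (n - 1)) = measure cake (B \<inter> x (n - 1)) / (2 * real n * u)"
    by (rule value_B[OF x_sets[OF last]])
  also have "\<dots> = 1 / real n"
    using B_piece_eq[OF last] u_pos by simp
  finally show ?thesis .
qed


end

context cake_instance
begin

lemma complete_envy_free_values:
  assumes "division n x" "complete_div n x" "envy_free n val x"
  shows "k < n - 2 \<Longrightarrow> util val x k k = 1 / 2" "util val x (n - 1) (n - 1) = 1 / real n"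
proof -
  obtain a b where "\<And>i. i < n \<Longrightarrow> 0 \<le> a i \<and> b i \<le> 1 \<and> x i = {a i<..<b i}"
    using division_endpoints[OF assms(1)] by blast
  then interpret complete_envy_free n x a b
    using assms n_gt_2 by unfold_locales
  show "k < n - 2 \<Longrightarrow> util val x k k = 1 / 2" "util val x (n - 1) (n - 1) = 1 / real n"
    using small_player_value last_player_value by (simp_all add: util_def)
qed

end

theorem theorem5:
  fixes n :: nat
  assumes "n > 2"
  shows "\<exists>v :: nat \<Rightarrow> real measure. (\<forall>i<n. valuation (v i)) \<and>
    (\<exists>y. division n y \<and> \<not> complete_div n y \<and> envy_free n v y \<and>
      (\<forall>x. division n x \<and> complete_div n x \<and> envy_free n v x \<longrightarrow>
        (\<exists>S \<subseteq> {..<n}. card S = n - 2 \<and>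
           (\<forall>i\<in>S. util v y i i = 2 * util v x i i \<and> util v x i i > 0) \<and>
           (\<forall>i\<in>{..<n} - S. util v y i i \<ge> util v x i i))))"
proof -
  interpret cake_instance n using assms by unfold_locales
  have doubled: "\<exists>S \<subseteq> {..<n}. card S = n - 2 \<and>
      (\<forall>i\<in>S. util val y i i = 2 * util val x i i \<and> util val x i i > 0) \<and>
      (\<forall>i\<in>{..<n} - S. util val y i i \<ge> util val x i i)"
    if x: "division n x" "complete_div n x" "envy_free n val x" for x
  proof (intro exI[of _ "{..<n - 2}"] conjI ballI)
    fix i assume "i \<in> {..<n - 2}"
    then have "util val x i i = 1 / 2" "util val y i i = 1"
      using complete_envy_free_values(1)[OF x] y_value_P by (auto simp: util_def)
    then show "util val y i i = 2 * util val x i i" "util val x i i > 0" by simp_all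
  next
    fix i assume "i \<in> {..<n} - {..<n - 2}"
    then consider "i = n - 2" | "i = n - 1" by fastforce
    then show "util val y i i \<ge> util val x i i"
    proof cases
      case 1
      then show ?thesis using y_value_C value_le_1[of i] assms by (simp add: util_def)
    next
      case 2
      then show ?thesis using y_value_B complete_envy_free_values(2)[OF x] by (simp add: util_def)
    qed
  qed auto
  show ?thesis
    using valuation_val y_division y_not_complete y_envy_free doubled by blast
qed

end
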